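(* Let $\tilde p,\tilde d\in C^{2}((0,1],\mathbb{R})$, $\tilde b\in C^2((0,1],\mathbb{C})$, $\tilde c\in C^1((0,1],\mathbb{C})$, $\tilde q\in C((0,1],\mathbb{R})$ with $\tilde p>0$ on $(0,1]$, and $w_1,w_2\in C^2((0,1],\mathbb{R})$ with $w:=w_1w_2>0$ on $(0,1)$. Assume: ($\tilde{\mathrm B}$1) the (possibly improper) limit $\tilde d_0:=\lim_{x\to0+}\tilde d(x)$ exists; ($\tilde{\mathrm B}$2) there are $\tilde\beta,\tilde\gamma>0$ with $|\tilde b(x)/x|\le\tilde\beta(|\tilde d(x)|+1)$, $|\tilde c(x)|\le\tilde\gamma(|\tilde d(x)|+1)$ for all $x\in(0,1]$; ($\tilde{\mathrm B}$3a) for some $\lambda\in\mathbb{R}\setminus\{\tilde d_0\}$ there is $x_\lambda\in(0,1)$ such that $\tilde\pi(x,\lambda)/x^2$ is bounded on $(0,x_\lambda]$; ($\tilde{\mathrm B}$3b) for all $\lambda\in\mathbb{R}\setminus(\overline{\tilde\Delta((0,1])}\cup\{\tilde d_0\})$ there is $x_\lambda\in(0,1)$ such that $x^2/\tilde\pi(x,\lambda)$, $\tilde\rho(x,\lambda)/x$, $\tilde\kappa(x,\lambda)$ are (defined and) bounded on $(0,x_\lambda]$; ($\tilde{\mathrm C}$1) for $\lambda\in\mathbb{R}\setminus(\overline{\tilde\Delta((0,1])}\cup\{\tilde d_0\})$ the limits $\tilde\rho_0(\lambda):=\lim_{x\to0+}\frac{x\tilde\rho(x,\lambda)}{\tilde\pi(x,\lambda)}$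 and $\tilde\kappa_0(\lambda):=\lim_{x\to0+}\frac{x^2\tilde\kappa(x,\lambda)}{\tilde\pi(x,\lambda)}$ exist and are finite; ($\tilde{\mathrm C}$2) the limit $\lim_{x\to0+}\frac{x^2w''(x)}{w(x)}$ exists and is finite. Let $W(t):=1+e^{-t}\frac{w'(e^{-t})}{w(e^{-t})}$, $t\in[0,\infty)$. Then for $\lambda\in\mathbb{R}\setminus(\overline{\tilde\Delta((0,1])}\cup\{\tilde d_0\})$, $$\lim_{x\to0+}x\frac{\frac{\partial}{\partial x}\tilde\pi(x,\lambda)}{\tilde\pi(x,\lambda)}=2,$$ $\lim_{t\to\infty}W(t)$ exists and is finite, $\lim_{t\to\infty}W'(t)=0$, and $\operatorname{Im}\tilde\rho_0(\lambda)=1+\lim_{t\to\infty}W(t)$.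
   Context: Definitions (for $x\in(0,1]$ with $\tilde d(x)\ne\lambda$): $\tilde\pi(x,\lambda):=\frac{w_2}{w_1}\tilde p-\frac{|\tilde b|^2}{\tilde d-\lambda}$; $\tilde\rho(x,\lambda):=-\frac{2\operatorname{Im}(\tilde b\overline{\tilde c})}{\tilde d-\lambda}+i\frac1w\frac{\partial}{\partial x}(w\tilde\pi(\cdot,\lambda))$; $\tilde\kappa(x,\lambda):=\tilde q-\lambda-\frac{|\tilde c|^2}{\tilde d-\lambda}+\frac1w\Big(w\frac{\overline{\tilde b}\tilde c}{\tilde d-\lambda}\Big)'-\frac{(\tilde p w_2')'}{w_1}$; $\tilde\Delta(x):=\tilde d(x)-\frac{w_1(x)}{w_2(x)}\frac{|\tilde b(x)|^2}{\tilde p(x)}$. Overline on a set denotes closure in $\mathbb{R}$. *)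

theory Defs
  imports "HOL-Analysis.Analysis" "HOL-Library.Extended_Real"
begin

text \<open>C^1 / C^2 on a set S (one-sided derivatives at boundary points of S), for
  functions of a real variable with values in a normed vector space.\<close>
definition C1_on :: "real set \<Rightarrow> (real \<Rightarrow> 'a::real_normed_vector) \<Rightarrow> bool" where
  "C1_on S f \<longleftrightarrow> (\<exists>f'. (\<forall>x\<in>S. (f has_vector_derivative f' x) (at x within S))
                        \<and> continuous_on S f')"

definition C2_on :: "real set \<Rightarrow> (real \<Rightarrow> 'a::real_normed_vector) \<Rightarrow> bool" where
  "C2_on S f \<longleftrightarrow> (\<exists>f' f''. (\<forall>x\<in>S. (f has_vector_derivative f' x) (at x within S))
                        \<and> (\<forall>x\<in>S. (f' has_vector_derivative f'' x) (at x within S))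
                        \<and> continuous_on S f'')"

definition wt :: "(real \<Rightarrow> real) \<Rightarrow> (real \<Rightarrow> real) \<Rightarrow> real \<Rightarrow> real" where
  "wt w1 w2 x = w1 x * w2 x"

definition pit :: "(real \<Rightarrow> real) \<Rightarrow> (real \<Rightarrow> complex) \<Rightarrow> (real \<Rightarrow> real) \<Rightarrow>
    (real \<Rightarrow> real) \<Rightarrow> (real \<Rightarrow> real) \<Rightarrow> real \<Rightarrow> real \<Rightarrow> real" where
  "pit p b d w1 w2 x lam = w2 x / w1 x * p x - (cmod (b x))\<^sup>2 / (d x - lam)"

definition rhot :: "(real \<Rightarrow> real) \<Rightarrow> (real \<Rightarrow> complex) \<Rightarrow> (real \<Rightarrow> complex) \<Rightarrow>
    (real \<Rightarrow> real) \<Rightarrow> (real \<Rightarrow> real) \<Rightarrow> (real \<Rightarrow> real) \<Rightarrow> real \<Rightarrow> real \<Rightarrow> complex" where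
  "rhot p b c d w1 w2 x lam =
     complex_of_real (- 2 * Im (b x * cnj (c x)) / (d x - lam))
     + \<i> * complex_of_real (1 / wt w1 w2 x
            * deriv (\<lambda>y. wt w1 w2 y * pit p b d w1 w2 y lam) x)"

definition kappat :: "(real \<Rightarrow> real) \<Rightarrow> (real \<Rightarrow> complex) \<Rightarrow> (real \<Rightarrow> complex) \<Rightarrow>
    (real \<Rightarrow> real) \<Rightarrow> (real \<Rightarrow> real) \<Rightarrow> (real \<Rightarrow> real) \<Rightarrow> (real \<Rightarrow> real) \<Rightarrow>
    real \<Rightarrow> real \<Rightarrow> complex" where
  "kappat p b c d q w1 w2 x lam =
     complex_of_real (q x - lam - (cmod (c x))\<^sup>2 / (d x - lam))
     + complex_of_real (1 / wt w1 w2 x)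
       * vector_derivative
           (\<lambda>y. complex_of_real (wt w1 w2 y) * (cnj (b y) * c y) / complex_of_real (d y - lam))
           (at x)
     - complex_of_real (deriv (\<lambda>y. p y * deriv w2 y) x / w1 x)"

definition Deltat :: "(real \<Rightarrow> real) \<Rightarrow> (real \<Rightarrow> complex) \<Rightarrow> (real \<Rightarrow> real) \<Rightarrow>
    (real \<Rightarrow> real) \<Rightarrow> (real \<Rightarrow> real) \<Rightarrow> real \<Rightarrow> real" where
  "Deltat p b d w1 w2 x = d x - w1 x / w2 x * (cmod (b x))\<^sup>2 / p x"

end

theory Submission
  imports Defs "HOL-Computational_Algebra.Polynomial" "HOL-Real_Asymp.Real_Asymp"
begin

text \<open>
  Put Y = x w'/w and Z = x pi'/pi, where pi = pi~(., lam), and pass to logarithmic time t = - ln x.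
  Then Im (x rho~/pi) = x (w pi)'/(w pi) = Y + Z tends to Im rho~0 by (C1); h(t) = Y(exp (- t))
  satisfies the asymptotic Riccati equation h' = h^2 - h - K + o(1), K being the limit in (C2);
  and, pi being comparable to x^2 by (B3), u(t) = ln |pi(exp (- t))| + 2 t is bounded with
  u' = 2 - Z = h - c + o(1), where c = Im rho~0 - 2.
  A bounded function cannot have a derivative eventually bounded away from 0. As the Riccati
  equation forces h eventually to one side of every level that is not an equilibrium, this
  yields h \<longlongrightarrow> c, and then h' \<longlongrightarrow> c^2 - c - K, which must vanish for the same reason.
  Hence Z \<longlongrightarrow> 2, W = 1 + h \<longlongrightarrow> Im rho~0 - 1 and W' = h' \<longlongrightarrow> 0.
  The bound pi = O(x^2) holds for every lam \<noteq> d~0 once it holds for one: by (B1) and (B2) the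
  difference of two values of pi~ is O(|b|^2/(|d| + 1)^2) = O(x^2).
\<close>

lemma bounded_imp_not_eventually_derivative_ge:
  fixes u u' :: "real \<Rightarrow> real" and M \<delta> :: real
  assumes deriv: "eventually (\<lambda>t. (u has_real_derivative u' t) (at t)) at_top"
    and bounded: "eventually (\<lambda>t. \<bar>u t\<bar> \<le> M) at_top"
    and "\<delta> > 0"
  shows "\<not> eventually (\<lambda>t. u' t \<ge> \<delta>) at_top"
proof
  assume "eventually (\<lambda>t. u' t \<ge> \<delta>) at_top"
  from eventually_conj[OF deriv eventually_conj[OF bounded this]] obtain T where
    T: "\<And>t. t \<ge> T \<Longrightarrow> (u has_real_derivative u' t) (at t) \<and> \<bar>u t\<bar> \<le> M \<and> u' t \<ge> \<delta>"
    unfolding eventually_at_top_linorder by blast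
  define t where "t = T + (2 * M + 1) / \<delta>"
  have "M \<ge> 0" using T[of T] by linarith
  then have "T \<le> t" using \<open>\<delta> > 0\<close> by (simp add: t_def)
  have "u T - \<delta> * T \<le> u t - \<delta> * t"
  proof (rule DERIV_nonneg_imp_nondecreasing[OF \<open>T \<le> t\<close>])
    fix s assume "T \<le> s"
    with T[of s] show "\<exists>y. ((\<lambda>s. u s - \<delta> * s) has_real_derivative y) (at s) \<and> y \<ge> 0"
      by (auto intro!: exI derivative_eq_intros)
  qed
  moreover have "\<delta> * (t - T) = 2 * M + 1" using \<open>\<delta> > 0\<close> by (simp add: t_def)
  moreover have "\<bar>u t\<bar> \<le> M" "\<bar>u T\<bar> \<le> M" using T \<open>T \<le> t\<close> by auto
  ultimately show False by (simp add: algebra_simps)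
qed

lemma bounded_imp_not_eventually_derivative_le:
  fixes u u' :: "real \<Rightarrow> real" and M \<delta> :: real
  assumes deriv: "eventually (\<lambda>t. (u has_real_derivative u' t) (at t)) at_top"
    and bounded: "eventually (\<lambda>t. \<bar>u t\<bar> \<le> M) at_top"
    and "\<delta> > 0"
  shows "\<not> eventually (\<lambda>t. u' t \<le> - \<delta>) at_top"
proof -
  have "eventually (\<lambda>t. ((\<lambda>t. - u t) has_real_derivative - u' t) (at t)) at_top"
    using deriv by eventually_elim (rule DERIV_minus)
  from bounded_imp_not_eventually_derivative_ge[OF this _ \<open>\<delta> > 0\<close>] bounded
  show ?thesis by (simp add: le_minus_iff)
qed

lemma bounded_imp_derivative_limit_zero:
  fixes u u' :: "real \<Rightarrow> real" and M L :: real
  assumes deriv: "eventually (\<lambda>t. (u has_real_derivative u' t) (at t)) at_top"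
    and bounded: "eventually (\<lambda>t. \<bar>u t\<bar> \<le> M) at_top"
    and lim: "(u' \<longlongrightarrow> L) at_top"
  shows "L = 0"
proof (rule ccontr)
  assume "L \<noteq> 0"
  then have "\<bar>L\<bar> / 2 > 0" by simp
  from tendstoD[OF lim this] have close: "eventually (\<lambda>t. \<bar>u' t - L\<bar> < \<bar>L\<bar> / 2) at_top"
    by (simp add: dist_real_def)
  show False
  proof (cases "L > 0")
    case True
    from close have "eventually (\<lambda>t. u' t \<ge> L / 2) at_top"
      by eventually_elim (use True in \<open>unfold abs_less_iff, simp add: field_simps\<close>)
    moreover have "L / 2 > 0" using True by simp
    ultimately show False using bounded_imp_not_eventually_derivative_ge[OF deriv bounded] by blast
  next
    case False
    with \<open>L \<noteq> 0\<close> have "L < 0" by simp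
    from close have "eventually (\<lambda>t. u' t \<le> - (- L / 2)) at_top"
      by eventually_elim (use \<open>L < 0\<close> in \<open>unfold abs_less_iff, simp add: field_simps\<close>)
    moreover have "- L / 2 > 0" using \<open>L < 0\<close> by simp
    ultimately show False using bounded_imp_not_eventually_derivative_le[OF deriv bounded] by blast
  qed
qed

lemma upcrossing_barrier:
  fixes h h' :: "real \<Rightarrow> real"
  assumes deriv: "\<And>t. t \<ge> S \<Longrightarrow> (h has_real_derivative h' t) (at t)"
    and crossing: "\<And>t. t \<ge> S \<Longrightarrow> h t = y \<Longrightarrow> h' t > 0"
    and "S \<le> s" "h s \<ge> y" "s \<le> s'"
  shows "h s' \<ge> y"
proof (rule ccontr)
  assume "\<not> h s' \<ge> y"
  define A where "A = {s..s'} \<inter> h -` {y..}"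
  have cont: "isCont h t" if "t \<ge> S" for t using deriv[OF that] by (rule DERIV_isCont)
  have "closed A" unfolding A_def
    using \<open>S \<le> s\<close> cont by (intro continuous_closed_preimage continuous_at_imp_continuous_on) auto
  have bdd: "bdd_above A" unfolding A_def by (rule bdd_aboveI[of _ s']) auto
  \<comment> \<open>The last time \<sigma> in [s, s'] with h \<ge> y is a crossing of y, where h' > 0 contradicts maximality.\<close>
  define \<sigma> where "\<sigma> = Sup A"
  have "\<sigma> \<in> A" unfolding \<sigma>_def
    using \<open>closed A\<close> bdd assms(4,5) by (intro closed_contains_Sup) (auto simp: A_def)
  then have \<sigma>: "s \<le> \<sigma>" "\<sigma> \<le> s'" "h \<sigma> \<ge> y" by (auto simp: A_def)
  obtain z where z: "\<sigma> \<le> z" "z \<le> s'" "h z = y"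
    using IVT2[of h s' y \<sigma>] \<sigma> \<open>\<not> h s' \<ge> y\<close> cont \<open>S \<le> s\<close> by force
  have "z \<le> \<sigma>" unfolding \<sigma>_def using z \<sigma> bdd by (intro cSup_upper) (auto simp: A_def)
  with z have "h \<sigma> = y" by simp
  with \<sigma>(2) \<open>\<not> h s' \<ge> y\<close> have "\<sigma> < s'" using order.order_iff_strict by fastforce
  have "S \<le> \<sigma>" using \<sigma>(1) \<open>S \<le> s\<close> by linarith
  obtain e where e: "e > 0" "\<forall>k>0. k < e \<longrightarrow> h \<sigma> < h (\<sigma> + k)"
    using DERIV_pos_inc_right[OF deriv[OF \<open>S \<le> \<sigma>\<close>] crossing[OF \<open>S \<le> \<sigma>\<close> \<open>h \<sigma> = y\<close>]] by blast
  define k where "k = min e (s' - \<sigma>) / 2"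
  have "k > 0" "k < e" "\<sigma> + k \<le> s'" using e \<open>\<sigma> < s'\<close> by (auto simp: k_def min_def field_simps)
  then have "\<sigma> + k \<in> A" using e \<sigma> \<open>h \<sigma> = y\<close> by (auto simp: A_def)
  then have "\<sigma> + k \<le> \<sigma>" unfolding \<sigma>_def using bdd by (rule cSup_upper)
  then show False using \<open>k > 0\<close> by simp
qed

lemma eventually_above_or_below_if_drift_pos:
  fixes h h' g :: "real \<Rightarrow> real"
  assumes deriv: "eventually (\<lambda>t. (h has_real_derivative h' t) (at t)) at_top"
    and asymp: "((\<lambda>t. h' t - g (h t)) \<longlongrightarrow> 0) at_top"
    and "g y > 0"
  shows "eventually (\<lambda>t. h t \<ge> y) at_top \<or> eventually (\<lambda>t. h t \<le> y) at_top"
proof -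
  have "eventually (\<lambda>t. \<bar>h' t - g (h t)\<bar> < g y) at_top"
    using tendstoD[OF asymp \<open>g y > 0\<close>] by (simp add: dist_real_def)
  from eventually_conj[OF deriv this] obtain S where
    S: "\<And>t. t \<ge> S \<Longrightarrow> (h has_real_derivative h' t) (at t) \<and> \<bar>h' t - g (h t)\<bar> < g y"
    unfolding eventually_at_top_linorder by blast
  show ?thesis
  proof (cases "\<exists>s\<ge>S. h s \<ge> y")
    case True
    then obtain s where "s \<ge> S" "h s \<ge> y" by blast
    have crossing: "h' t > 0" if "t \<ge> S" "h t = y" for t
      using S[OF that(1)] that(2) by (simp add: abs_less_iff)
    have "h s' \<ge> y" if "s' \<ge> s" for s'
      using upcrossing_barrier[of S h h' y s s'] S crossing \<open>s \<ge> S\<close> \<open>h s \<ge> y\<close> that by blast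
    then show ?thesis unfolding eventually_at_top_linorder by blast
  next
    case False
    then have "\<forall>s\<ge>S. h s \<le> y" by force
    then show ?thesis unfolding eventually_at_top_linorder by blast
  qed
qed

lemma eventually_above_or_below:
  fixes h h' g :: "real \<Rightarrow> real"
  assumes deriv: "eventually (\<lambda>t. (h has_real_derivative h' t) (at t)) at_top"
    and asymp: "((\<lambda>t. h' t - g (h t)) \<longlongrightarrow> 0) at_top"
    and "g y \<noteq> 0"
  shows "eventually (\<lambda>t. h t \<ge> y) at_top \<or> eventually (\<lambda>t. h t \<le> y) at_top"
proof (cases "g y > 0")
  case True
  with deriv asymp show ?thesis by (rule eventually_above_or_below_if_drift_pos)
next
  case False
  have "eventually (\<lambda>t. ((\<lambda>t. - h t) has_real_derivative - h' t) (at t)) at_top"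
    using deriv by eventually_elim (rule DERIV_minus)
  moreover have "((\<lambda>t. - h' t - (- g (- (- h t)))) \<longlongrightarrow> 0) at_top"
    using tendsto_minus[OF asymp] by simp
  moreover have "- g (- (- y)) > 0" using False \<open>g y \<noteq> 0\<close> by simp
  ultimately have "eventually (\<lambda>t. - h t \<ge> - y) at_top \<or> eventually (\<lambda>t. - h t \<le> - y) at_top"
    by (rule eventually_above_or_below_if_drift_pos[where g = "\<lambda>z. - g (- z)"])
  then show ?thesis by auto
qed

lemma poly_nonzero_in_interval:
  fixes p :: "real poly"
  assumes "p \<noteq> 0" "a < b"
  obtains y where "a < y" "y < b" "poly p y \<noteq> 0"
proof -
  have "\<not> {a<..<b} \<subseteq> {y. poly p y = 0}"
    using poly_roots_finite[OF \<open>p \<noteq> 0\<close>] \<open>a < b\<close> finite_subset infinite_Ioo by blast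
  then obtain y where "y \<in> {a<..<b}" "poly p y \<noteq> 0" by blast
  then show ?thesis by (intro that) auto
qed

lemma riccati_limit:
  fixes h h' u u' :: "real \<Rightarrow> real" and K c M :: real
  assumes h_deriv: "eventually (\<lambda>t. (h has_real_derivative h' t) (at t)) at_top"
    and riccati: "((\<lambda>t. h' t - ((h t)\<^sup>2 - h t - K)) \<longlongrightarrow> 0) at_top"
    and u_deriv: "eventually (\<lambda>t. (u has_real_derivative u' t) (at t)) at_top"
    and coupling: "((\<lambda>t. u' t - (h t - c)) \<longlongrightarrow> 0) at_top"
    and u_bounded: "eventually (\<lambda>t. \<bar>u t\<bar> \<le> M) at_top"
  shows "(h \<longlongrightarrow> c) at_top" and "(h' \<longlongrightarrow> 0) at_top"
proof -
  define g where "g = [:- K, - 1, 1:]"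
  have g_eval: "poly g y = y\<^sup>2 - y - K" for y by (simp add: g_def power2_eq_square algebra_simps)
  have "g \<noteq> 0" by (simp add: g_def)
  have riccati': "((\<lambda>t. h' t - poly g (h t)) \<longlongrightarrow> 0) at_top" using riccati by (simp add: g_eval)
  have coupling_close: "eventually (\<lambda>t. \<bar>u' t - (h t - c)\<bar> < \<epsilon>) at_top" if "\<epsilon> > 0" for \<epsilon>
    using tendstoD[OF coupling that] by (simp add: dist_real_def)
  \<comment> \<open>If h stayed on one side of a level y away from c, the bounded function u would drift
    linearly; but by the Riccati equation h does eventually stay on one side of y.\<close>
  show h_lim: "(h \<longlongrightarrow> c) at_top"
  proof (rule order_tendstoI)
    fix a assume "a < c"
    then obtain y where y: "a < y" "y < c" "poly g y \<noteq> 0"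
      using poly_nonzero_in_interval[OF \<open>g \<noteq> 0\<close>] by blast
    have "\<not> eventually (\<lambda>t. h t \<le> y) at_top"
    proof
      assume side: "eventually (\<lambda>t. h t \<le> y) at_top"
      have gap: "(c - y) / 2 > 0" using y by simp
      from coupling_close[OF gap] side
      have "eventually (\<lambda>t. u' t \<le> - ((c - y) / 2)) at_top"
        by eventually_elim (unfold abs_less_iff, simp add: field_simps)
      with bounded_imp_not_eventually_derivative_le[OF u_deriv u_bounded gap] show False by blast
    qed
    with eventually_above_or_below[OF h_deriv riccati' y(3)]
    have "eventually (\<lambda>t. h t \<ge> y) at_top" by blast
    then show "eventually (\<lambda>t. a < h t) at_top" by eventually_elim (use y in auto)
  next
    fix a assume "c < a"
    then obtain y where y: "c < y" "y < a" "poly g y \<noteq> 0"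
      using poly_nonzero_in_interval[OF \<open>g \<noteq> 0\<close>] by blast
    have "\<not> eventually (\<lambda>t. h t \<ge> y) at_top"
    proof
      assume side: "eventually (\<lambda>t. h t \<ge> y) at_top"
      have gap: "(y - c) / 2 > 0" using y by simp
      from coupling_close[OF gap] side
      have "eventually (\<lambda>t. u' t \<ge> (y - c) / 2) at_top"
        by eventually_elim (unfold abs_less_iff, simp add: field_simps)
      with bounded_imp_not_eventually_derivative_ge[OF u_deriv u_bounded gap] show False by blast
    qed
    with eventually_above_or_below[OF h_deriv riccati' y(3)]
    have "eventually (\<lambda>t. h t \<le> y) at_top" by blast
    then show "eventually (\<lambda>t. h t < a) at_top" by eventually_elim (use y in auto)
  qed
  have "((\<lambda>t. (h t)\<^sup>2 - h t - K) \<longlongrightarrow> c\<^sup>2 - c - K) at_top" by (intro tendsto_intros h_lim)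
  from tendsto_add[OF riccati this] have h'_lim: "(h' \<longlongrightarrow> c\<^sup>2 - c - K) at_top" by simp
  have h_bounded: "eventually (\<lambda>t. \<bar>h t\<bar> \<le> \<bar>c\<bar> + 1) at_top"
    using tendstoD[OF h_lim, of 1] by (auto elim!: eventually_mono simp: dist_real_def)
  from bounded_imp_derivative_limit_zero[OF h_deriv h_bounded h'_lim] h'_lim
  show "(h' \<longlongrightarrow> 0) at_top" by simp
qed

lemma scaled_log_derivative_riccati:
  fixes w :: "real \<Rightarrow> real"
  defines "Y \<equiv> \<lambda>x. x * deriv w x / w x"
  assumes "(w has_real_derivative deriv w (exp (- t))) (at (exp (- t)))"
    and "(deriv w has_real_derivative deriv (deriv w) (exp (- t))) (at (exp (- t)))"
    and "w (exp (- t)) \<noteq> 0"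
  shows "((\<lambda>s. Y (exp (- s))) has_real_derivative
           (Y (exp (- t)))\<^sup>2 - Y (exp (- t)) - (exp (- t))\<^sup>2 * deriv (deriv w) (exp (- t)) / w (exp (- t)))
         (at t)"
proof -
  define x where "x = exp (- t)"
  have "(Y has_real_derivative
          ((deriv w x + x * deriv (deriv w) x) * w x - x * deriv w x * deriv w x) / (w x)\<^sup>2) (at x)"
    unfolding Y_def x_def using assms by (auto intro!: derivative_eq_intros simp: power2_eq_square)
  moreover have "((\<lambda>s. exp (- s)) has_real_derivative - x) (at t)"
    unfolding x_def by (auto intro!: derivative_eq_intros)
  ultimately have "((\<lambda>s. Y (exp (- s))) has_real_derivative
      ((deriv w x + x * deriv (deriv w) x) * w x - x * deriv w x * deriv w x) / (w x)\<^sup>2 * - x) (at t)"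
    unfolding x_def by (rule DERIV_chain2)
  moreover have "((deriv w x + x * deriv (deriv w) x) * w x - x * deriv w x * deriv w x) / (w x)\<^sup>2 * - x
      = (Y x)\<^sup>2 - Y x - x\<^sup>2 * deriv (deriv w) x / w x"
    unfolding Y_def using \<open>w (exp (- t)) \<noteq> 0\<close> by (simp add: x_def field_simps power2_eq_square)
  ultimately show ?thesis by (simp add: x_def)
qed

text \<open>ln (P^2) / 2 = ln |P| is differentiable wherever P is nonzero, without a case split on the sign of P.\<close>

lemma scaled_log_abs_derivative:
  fixes P :: "real \<Rightarrow> real"
  assumes P': "(P has_real_derivative deriv P (exp (- t))) (at (exp (- t)))"
    and "P (exp (- t)) \<noteq> 0"
  shows "((\<lambda>s. ln ((P (exp (- s)))\<^sup>2) / 2 + 2 * s) has_real_derivative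
           2 - exp (- t) * deriv P (exp (- t)) / P (exp (- t))) (at t)"
proof -
  have "((\<lambda>s. exp (- s)) has_real_derivative - exp (- t)) (at t)"
    by (auto intro!: derivative_eq_intros)
  from DERIV_chain2[OF P' this]
  have "((\<lambda>s. P (exp (- s))) has_real_derivative deriv P (exp (- t)) * - exp (- t)) (at t)" .
  moreover have "(P (exp (- t)))\<^sup>2 > 0" using \<open>P (exp (- t)) \<noteq> 0\<close> by simp
  ultimately show ?thesis
    using \<open>P (exp (- t)) \<noteq> 0\<close>
    by (auto intro!: derivative_eq_intros simp: field_simps power2_eq_square)
qed

lemma log_comparable_to_square:
  fixes v t M1 M2 :: real
  assumes lower: "(exp (- t))\<^sup>2 \<le> M1 * \<bar>v\<bar>" and upper: "\<bar>v\<bar> \<le> M2 * (exp (- t))\<^sup>2"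
    and "v \<noteq> 0"
  shows "\<bar>ln (v\<^sup>2) / 2 + 2 * t\<bar> \<le> \<bar>ln M1\<bar> + \<bar>ln M2\<bar>"
proof -
  have "\<bar>v\<bar> > 0" "(exp (- t))\<^sup>2 > 0" using \<open>v \<noteq> 0\<close> by simp_all
  moreover have "0 < M1 * \<bar>v\<bar>" "0 < M2 * (exp (- t))\<^sup>2"
    using lower upper \<open>\<bar>v\<bar> > 0\<close> \<open>(exp (- t))\<^sup>2 > 0\<close> by linarith+
  ultimately have "M1 > 0" "M2 > 0" by (simp_all add: zero_less_mult_iff)
  have ln_square: "ln ((exp (- t))\<^sup>2) = - 2 * t" by (simp add: ln_realpow)
  have "ln (v\<^sup>2) / 2 = ln \<bar>v\<bar>"
    using ln_realpow[of "\<bar>v\<bar>" 2] by simp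
  moreover have "- 2 * t \<le> ln M1 + ln \<bar>v\<bar>"
    using ln_mono[OF lower] \<open>M1 > 0\<close> \<open>\<bar>v\<bar> > 0\<close> by (simp add: ln_mult ln_square)
  moreover have "ln \<bar>v\<bar> \<le> ln M2 - 2 * t"
    using ln_mono[OF upper] \<open>M2 > 0\<close> \<open>\<bar>v\<bar> > 0\<close> by (simp add: ln_mult ln_square)
  ultimately show ?thesis by linarith
qed

lemma tendsto_at_right_0_of_exp_minus:
  fixes f :: "real \<Rightarrow> 'a::topological_space"
  assumes "((\<lambda>t. f (exp (- t))) \<longlongrightarrow> l) at_top"
  shows "(f \<longlongrightarrow> l) (at_right 0)"
proof -
  have "filterlim (\<lambda>x. - ln x) at_top (at_right (0::real))" by real_asymp
  from filterlim_compose[OF assms this] have "((\<lambda>x. f (exp (- (- ln x)))) \<longlongrightarrow> l) (at_right 0)" .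
  moreover have "eventually (\<lambda>x. f (exp (- (- ln x))) = f x) (at_right 0)"
    unfolding eventually_at_right_field by (intro exI[of _ 1]) auto
  ultimately show ?thesis by (rule Lim_transform_eventually)
qed

lemma scaled_log_derivative_limits:
  fixes w P :: "real \<Rightarrow> real"
  defines "W \<equiv> \<lambda>t. 1 + exp (- t) * deriv w (exp (- t)) / w (exp (- t))"
  assumes regular: "eventually (\<lambda>x.
          w x \<noteq> 0 \<and> (w has_real_derivative deriv w x) (at x)
        \<and> (deriv w has_real_derivative deriv (deriv w) x) (at x)
        \<and> P x \<noteq> 0 \<and> (P has_real_derivative deriv P x) (at x)) (at_right 0)"
    and comparable: "eventually (\<lambda>x. x\<^sup>2 \<le> M1 * \<bar>P x\<bar> \<and> \<bar>P x\<bar> \<le> M2 * x\<^sup>2) (at_right 0)"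
    and K_lim: "((\<lambda>x. x\<^sup>2 * deriv (deriv w) x / w x) \<longlongrightarrow> K) (at_right 0)"
    and sum_lim: "((\<lambda>x. x * deriv w x / w x + x * deriv P x / P x) \<longlongrightarrow> R) (at_right 0)"
  shows "((\<lambda>x. x * deriv P x / P x) \<longlongrightarrow> 2) (at_right 0)"
    and "(W \<longlongrightarrow> R - 1) at_top"
    and "((\<lambda>t. deriv W t) \<longlongrightarrow> 0) at_top"
proof -
  define Y where "Y x = x * deriv w x / w x" for x
  define Z where "Z x = x * deriv P x / P x" for x
  define Kf where "Kf x = x\<^sup>2 * deriv (deriv w) x / w x" for x
  define h where "h t = Y (exp (- t))" for t
  define h' where "h' t = (h t)\<^sup>2 - h t - Kf (exp (- t))" for t
  define u where "u t = ln ((P (exp (- t)))\<^sup>2) / 2 + 2 * t" for t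
  define u' where "u' t = 2 - Z (exp (- t))" for t
  have exp_lim: "filterlim (\<lambda>t::real. exp (- t)) (at_right 0) at_top" by real_asymp
  from eventually_compose_filterlim[OF eventually_conj[OF regular comparable] exp_lim]
  have small: "eventually (\<lambda>t. let x = exp (- t) in
      w x \<noteq> 0 \<and> (w has_real_derivative deriv w x) (at x)
    \<and> (deriv w has_real_derivative deriv (deriv w) x) (at x)
    \<and> P x \<noteq> 0 \<and> (P has_real_derivative deriv P x) (at x)
    \<and> x\<^sup>2 \<le> M1 * \<bar>P x\<bar> \<and> \<bar>P x\<bar> \<le> M2 * x\<^sup>2) at_top"
    by (simp add: Let_def)
  have h_deriv: "eventually (\<lambda>t. (h has_real_derivative h' t) (at t)) at_top"
    using small
  proof eventually_elim
    case (elim t)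
    with scaled_log_derivative_riccati[of w t] show ?case
      unfolding h_def h'_def Y_def Kf_def Let_def by auto
  qed
  have u_deriv: "eventually (\<lambda>t. (u has_real_derivative u' t) (at t)) at_top"
    using small
  proof eventually_elim
    case (elim t)
    with scaled_log_abs_derivative[of P t] show ?case
      unfolding u_def u'_def Z_def Let_def by auto
  qed
  have u_bounded: "eventually (\<lambda>t. \<bar>u t\<bar> \<le> \<bar>ln M1\<bar> + \<bar>ln M2\<bar>) at_top"
    using small
  proof eventually_elim
    case (elim t)
    with log_comparable_to_square[of t M1 "P (exp (- t))" M2] show ?case
      unfolding u_def Let_def by auto
  qed
  have "((\<lambda>t. K - Kf (exp (- t))) \<longlongrightarrow> K - K) at_top"
    using filterlim_compose[OF K_lim[folded Kf_def] exp_lim] by (intro tendsto_intros)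
  then have riccati: "((\<lambda>t. h' t - ((h t)\<^sup>2 - h t - K)) \<longlongrightarrow> 0) at_top"
    by (simp add: h'_def)
  have "((\<lambda>t. R - (Y (exp (- t)) + Z (exp (- t)))) \<longlongrightarrow> R - R) at_top"
    using filterlim_compose[OF sum_lim[folded Y_def Z_def] exp_lim] by (intro tendsto_intros)
  then have coupling: "((\<lambda>t. u' t - (h t - (R - 2))) \<longlongrightarrow> 0) at_top"
    by (simp add: u'_def h_def algebra_simps)
  from riccati_limit[OF h_deriv riccati u_deriv coupling u_bounded]
  have h_lim: "(h \<longlongrightarrow> R - 2) at_top" and h'_lim: "(h' \<longlongrightarrow> 0) at_top" .
  from tendsto_diff[OF sum_lim[folded Y_def Z_def] tendsto_at_right_0_of_exp_minus[OF h_lim[unfolded h_def]]]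
  show "((\<lambda>x. x * deriv P x / P x) \<longlongrightarrow> 2) (at_right 0)" by (simp add: Z_def)
  have W_eq: "W = (\<lambda>t. 1 + h t)" unfolding W_def h_def Y_def by simp
  have "((\<lambda>t. 1 + h t) \<longlongrightarrow> 1 + (R - 2)) at_top" by (intro tendsto_intros h_lim)
  then show "(W \<longlongrightarrow> R - 1) at_top" unfolding W_eq by simp
  have "eventually (\<lambda>t. deriv W t = h' t) at_top"
    using h_deriv
  proof eventually_elim
    case (elim t)
    then have "(W has_real_derivative 0 + h' t) (at t)" unfolding W_eq by (intro derivative_intros)
    then show ?case by (simp add: DERIV_imp_deriv)
  qed
  with h'_lim show "((\<lambda>t. deriv W t) \<longlongrightarrow> 0) at_top" by (simp add: tendsto_cong)
qed

lemma C2_on_mult: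
  fixes f g :: "real \<Rightarrow> real"
  assumes "C2_on S f" and "C2_on S g"
  shows "C2_on S (\<lambda>x. f x * g x)"
proof -
  obtain f' f'' where f': "\<And>x. x \<in> S \<Longrightarrow> (f has_real_derivative f' x) (at x within S)"
    and f'': "\<And>x. x \<in> S \<Longrightarrow> (f' has_real_derivative f'' x) (at x within S)"
    and "continuous_on S f''"
    using assms(1) unfolding C2_on_def has_real_derivative_iff_has_vector_derivative by blast
  obtain g' g'' where g': "\<And>x. x \<in> S \<Longrightarrow> (g has_real_derivative g' x) (at x within S)"
    and g'': "\<And>x. x \<in> S \<Longrightarrow> (g' has_real_derivative g'' x) (at x within S)"
    and "continuous_on S g''"
    using assms(2) unfolding C2_on_def has_real_derivative_iff_has_vector_derivative by blast
  define h' where "h' x = f' x * g x + f x * g' x" for x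
  define h'' where "h'' x = f'' x * g x + f' x * g' x + (f' x * g' x + f x * g'' x)" for x
  have "continuous_on S f" "continuous_on S f'" "continuous_on S g" "continuous_on S g'"
    using f' f'' g' g'' unfolding continuous_on_eq_continuous_within
    by (meson DERIV_continuous)+
  then have "continuous_on S h''"
    unfolding h''_def using \<open>continuous_on S f''\<close> \<open>continuous_on S g''\<close> by (intro continuous_intros)
  moreover have "\<forall>x\<in>S. ((\<lambda>x. f x * g x) has_vector_derivative h' x) (at x within S)"
    "\<forall>x\<in>S. (h' has_vector_derivative h'' x) (at x within S)"
    using f' f'' g' g'' unfolding h'_def h''_def has_real_derivative_iff_has_vector_derivative [symmetric]
    by (auto intro!: derivative_eq_intros)
  ultimately show ?thesis
    unfolding C2_on_def by (intro exI[of _ h'] exI[of _ h'']) simp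
qed

lemma C2_on_has_deriv_at:
  fixes f :: "real \<Rightarrow> real"
  assumes "C2_on S f" and "open T" "T \<subseteq> S" "x \<in> T"
  shows "(f has_real_derivative deriv f x) (at x)"
    and "(deriv f has_real_derivative deriv (deriv f) x) (at x)"
proof -
  obtain f' f'' where f': "\<And>y. y \<in> S \<Longrightarrow> (f has_vector_derivative f' y) (at y within S)"
    and f'': "\<And>y. y \<in> S \<Longrightarrow> (f' has_vector_derivative f'' y) (at y within S)"
    using assms(1) unfolding C2_on_def by blast
  have at: "(f has_real_derivative f' y) (at y)" "(f' has_real_derivative f'' y) (at y)" if "y \<in> T" for y
  proof -
    have "(f has_vector_derivative f' y) (at y within T)" "(f' has_vector_derivative f'' y) (at y within T)"
      using f' f'' that \<open>T \<subseteq> S\<close> by (auto intro: has_vector_derivative_within_subset)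
    then show "(f has_real_derivative f' y) (at y)" "(f' has_real_derivative f'' y) (at y)"
      unfolding has_real_derivative_iff_has_vector_derivative
      by (simp_all only: has_vector_derivative_within_open[OF that \<open>open T\<close>])
  qed
  have deriv_eq: "f' y = deriv f y" if "y \<in> T" for y
    using at(1)[OF that] by (rule DERIV_imp_deriv[symmetric])
  show "(f has_real_derivative deriv f x) (at x)"
    using at(1)[OF \<open>x \<in> T\<close>] unfolding deriv_eq[OF \<open>x \<in> T\<close>] .
  have "(deriv f has_real_derivative f'' x) (at x)"
    using at(2)[OF \<open>x \<in> T\<close>] \<open>open T\<close> \<open>x \<in> T\<close> deriv_eq
    by (rule has_field_derivative_transform_within_open)
  then show "(deriv f has_real_derivative deriv (deriv f) x) (at x)"
    using DERIV_imp_deriv by metis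
qed

lemma C2_on_differentiable_at:
  assumes "C2_on S f" and "open T" "T \<subseteq> S" "x \<in> T"
  shows "f differentiable at x"
proof -
  obtain f' where "(f has_vector_derivative f' x) (at x within S)"
    using assms(1,3,4) unfolding C2_on_def by blast
  then have "(f has_vector_derivative f' x) (at x within T)"
    by (rule has_vector_derivative_within_subset) fact
  then show ?thesis
    using has_vector_derivative_within_open[OF \<open>x \<in> T\<close> \<open>open T\<close>] by (auto intro: differentiableI_vector)
qed

lemma pit_differentiable_at:
  assumes "p differentiable at x" "b differentiable at x" "d differentiable at x"
    and "w1 differentiable at x" "w2 differentiable at x"
    and "w1 x \<noteq> 0" "d x \<noteq> lam"
  shows "(\<lambda>y. pit p b d w1 w2 y lam) differentiable at x"
proof -
  have "(b has_vector_derivative vector_derivative b (at x)) (at x)"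
    using assms(2) vector_derivative_works by blast
  moreover note assms(1,3,4,5)[unfolded DERIV_deriv_iff_real_differentiable[symmetric]]
  ultimately have "\<exists>D. ((\<lambda>y. w2 y / w1 y * p y - ((Re (b y))\<^sup>2 + (Im (b y))\<^sup>2) / (d y - lam))
      has_real_derivative D) (at x)"
    using assms(6,7)
    by (intro exI) (auto intro!: derivative_eq_intros has_field_derivative_Re has_field_derivative_Im)
  then show ?thesis
    unfolding pit_def cmod_power2 real_differentiable_def by blast
qed

lemma Im_scaled_rhot_div_pit:
  assumes "(wt w1 w2 has_real_derivative deriv (wt w1 w2) x) (at x)"
    and "((\<lambda>y. pit p b d w1 w2 y lam) has_real_derivative deriv (\<lambda>y. pit p b d w1 w2 y lam) x) (at x)"
    and "wt w1 w2 x \<noteq> 0" "pit p b d w1 w2 x lam \<noteq> 0"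
  shows "Im (complex_of_real x * rhot p b c d w1 w2 x lam / complex_of_real (pit p b d w1 w2 x lam))
       = x * deriv (wt w1 w2) x / wt w1 w2 x
         + x * deriv (\<lambda>y. pit p b d w1 w2 y lam) x / pit p b d w1 w2 x lam"
proof -
  define P where "P y = pit p b d w1 w2 y lam" for y
  have "((\<lambda>y. wt w1 w2 y * P y) has_real_derivative
      deriv (wt w1 w2) x * P x + wt w1 w2 x * deriv P x) (at x)"
    using assms(1,2) unfolding P_def by (auto intro!: derivative_eq_intros)
  then have "deriv (\<lambda>y. wt w1 w2 y * P y) x = deriv (wt w1 w2) x * P x + wt w1 w2 x * deriv P x"
    by (rule DERIV_imp_deriv)
  with assms(3,4) show ?thesis
    unfolding rhot_def P_def[symmetric] by (simp add: field_simps)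
qed

lemma eventually_separated_from_limit:
  fixes d :: "'a \<Rightarrow> real"
  assumes lim: "((\<lambda>x. ereal (d x)) \<longlongrightarrow> d0) F" and "ereal lam \<noteq> d0"
  obtains \<eta> where "\<eta> > 0" "eventually (\<lambda>x. \<eta> * (\<bar>d x\<bar> + 1) \<le> \<bar>d x - lam\<bar>) F"
proof (cases d0)
  case (real r)
  with \<open>ereal lam \<noteq> d0\<close> have "r \<noteq> lam" by simp
  define \<epsilon> where "\<epsilon> = min 1 (\<bar>r - lam\<bar> / 2)"
  have "\<epsilon> > 0" using \<open>r \<noteq> lam\<close> by (simp add: \<epsilon>_def)
  from lim real have "(d \<longlongrightarrow> r) F" by simp
  from tendstoD[OF this \<open>\<epsilon> > 0\<close>] have near: "eventually (\<lambda>x. \<bar>d x - r\<bar> < \<epsilon>) F"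
    by (simp add: dist_real_def)
  define \<eta> where "\<eta> = \<bar>r - lam\<bar> / (2 * (\<bar>r\<bar> + 2))"
  have "\<eta> > 0" using \<open>r \<noteq> lam\<close> by (simp add: \<eta>_def)
  have "eventually (\<lambda>x. \<eta> * (\<bar>d x\<bar> + 1) \<le> \<bar>d x - lam\<bar>) F"
    using near
  proof eventually_elim
    case (elim x)
    have "\<epsilon> \<le> 1" "\<epsilon> \<le> \<bar>r - lam\<bar> / 2" unfolding \<epsilon>_def by (rule min.cobounded1, rule min.cobounded2)
    with elim have "\<bar>d x\<bar> + 1 \<le> \<bar>r\<bar> + 2" "\<bar>r - lam\<bar> / 2 \<le> \<bar>d x - lam\<bar>"
      by (cases "r \<le> lam"; cases "d x \<le> r"; cases "d x \<le> lam"; simp)+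
    moreover have "\<eta> * (\<bar>r\<bar> + 2) = \<bar>r - lam\<bar> / 2"
      by (simp add: \<eta>_def field_simps)
    ultimately show ?case
      using mult_left_mono[of "\<bar>d x\<bar> + 1" "\<bar>r\<bar> + 2" \<eta>] \<open>\<eta> > 0\<close> by linarith
  qed
  with \<open>\<eta> > 0\<close> show ?thesis by (rule that)
next
  case PInf
  with lim have "eventually (\<lambda>x. ereal (2 * \<bar>lam\<bar> + 1) < ereal (d x)) F"
    by (simp add: tendsto_PInfty)
  then have "eventually (\<lambda>x. 1 / 2 * (\<bar>d x\<bar> + 1) \<le> \<bar>d x - lam\<bar>) F"
    by eventually_elim auto
  then show ?thesis by (rule that[rotated]) simp
next
  case MInf
  with lim have "eventually (\<lambda>x. ereal (d x) < ereal (- (2 * \<bar>lam\<bar> + 1))) F"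
    by (simp add: tendsto_MInfty)
  then have "eventually (\<lambda>x. 1 / 2 * (\<bar>d x\<bar> + 1) \<le> \<bar>d x - lam\<bar>) F"
    by eventually_elim auto
  then show ?thesis by (rule that[rotated]) simp
qed

lemma pit_bound_change_lambda:
  fixes x \<beta> \<eta> \<eta>0 M0 lam lam0 :: real
  assumes "x > 0"
    and b_bound: "cmod (b x / complex_of_real x) \<le> \<beta> * (\<bar>d x\<bar> + 1)"
    and sep: "\<eta> * (\<bar>d x\<bar> + 1) \<le> \<bar>d x - lam\<bar>" and sep0: "\<eta>0 * (\<bar>d x\<bar> + 1) \<le> \<bar>d x - lam0\<bar>"
    and "\<eta> > 0" "\<eta>0 > 0"
    and bound0: "\<bar>pit p b d w1 w2 x lam0 / x\<^sup>2\<bar> \<le> M0"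
  shows "\<bar>pit p b d w1 w2 x lam\<bar> \<le> (M0 + \<beta>\<^sup>2 * \<bar>lam0 - lam\<bar> / (\<eta> * \<eta>0)) * x\<^sup>2"
proof -
  define N where "N = \<bar>d x\<bar> + 1"
  define B where "B = (cmod (b x))\<^sup>2"
  have "N > 0" by (simp add: N_def)
  then have "d x - lam \<noteq> 0" "d x - lam0 \<noteq> 0"
    using sep sep0 \<open>\<eta> > 0\<close> \<open>\<eta>0 > 0\<close> unfolding N_def[symmetric]
    by (metis abs_zero mult_pos_pos not_le)+
  have "cmod (b x) \<le> \<beta> * x * N"
    using b_bound \<open>x > 0\<close> by (simp add: N_def norm_divide divide_le_eq algebra_simps)
  then have B_le: "B \<le> (\<beta> * x * N)\<^sup>2" unfolding B_def by (intro power_mono) auto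
  have "pit p b d w1 w2 x lam - pit p b d w1 w2 x lam0 = B * (lam0 - lam) / ((d x - lam0) * (d x - lam))"
    using \<open>d x - lam \<noteq> 0\<close> \<open>d x - lam0 \<noteq> 0\<close> by (simp add: pit_def B_def field_simps)
  then have "\<bar>pit p b d w1 w2 x lam - pit p b d w1 w2 x lam0\<bar>
      = B * \<bar>lam0 - lam\<bar> / (\<bar>d x - lam0\<bar> * \<bar>d x - lam\<bar>)"
    by (simp add: abs_mult B_def)
  also have "\<dots> \<le> (\<beta> * x * N)\<^sup>2 * \<bar>lam0 - lam\<bar> / ((\<eta>0 * N) * (\<eta> * N))"
    using B_le sep sep0 \<open>N > 0\<close> \<open>\<eta> > 0\<close> \<open>\<eta>0 > 0\<close> unfolding N_def[symmetric]
    by (intro frac_le mult_mono mult_right_mono) auto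
  also have "\<dots> = \<beta>\<^sup>2 * \<bar>lam0 - lam\<bar> / (\<eta> * \<eta>0) * x\<^sup>2"
    using \<open>N > 0\<close> \<open>\<eta> > 0\<close> \<open>\<eta>0 > 0\<close> by (simp add: field_simps power2_eq_square)
  finally have "\<bar>pit p b d w1 w2 x lam - pit p b d w1 w2 x lam0\<bar> \<le> \<beta>\<^sup>2 * \<bar>lam0 - lam\<bar> / (\<eta> * \<eta>0) * x\<^sup>2" .
  moreover have "\<bar>pit p b d w1 w2 x lam0\<bar> \<le> M0 * x\<^sup>2"
    using bound0 \<open>x > 0\<close> by (simp add: abs_divide divide_le_eq)
  ultimately show ?thesis by (simp add: algebra_simps)
qed

lemma eventually_pit_bounded_by_square:
  assumes d_lim: "((\<lambda>x. ereal (d x)) \<longlongrightarrow> d0) (at_right 0)"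
    and b_bound: "\<forall>x\<in>{0<..1}. cmod (b x / complex_of_real x) \<le> \<beta> * (\<bar>d x\<bar> + 1)"
    and "ereal lam \<noteq> d0" "ereal lam0 \<noteq> d0" "xl0 > 0"
    and bound0: "\<forall>x\<in>{0<..xl0}. \<bar>pit p b d w1 w2 x lam0 / x\<^sup>2\<bar> \<le> M0"
  obtains M where "eventually (\<lambda>x. \<bar>pit p b d w1 w2 x lam\<bar> \<le> M * x\<^sup>2) (at_right 0)"
proof -
  obtain \<eta> where "\<eta> > 0" and sep: "eventually (\<lambda>x. \<eta> * (\<bar>d x\<bar> + 1) \<le> \<bar>d x - lam\<bar>) (at_right 0)"
    using eventually_separated_from_limit[OF d_lim \<open>ereal lam \<noteq> d0\<close>] by blast
  obtain \<eta>0 where "\<eta>0 > 0" and sep0: "eventually (\<lambda>x. \<eta>0 * (\<bar>d x\<bar> + 1) \<le> \<bar>d x - lam0\<bar>) (at_right 0)"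
    using eventually_separated_from_limit[OF d_lim \<open>ereal lam0 \<noteq> d0\<close>] by blast
  have "eventually (\<lambda>x. 0 < x \<and> x \<le> 1 \<and> x \<le> xl0) (at_right 0)"
    unfolding eventually_at_right_field using \<open>xl0 > 0\<close> by (intro exI[of _ "min 1 xl0"]) auto
  from this sep sep0 have "eventually (\<lambda>x. \<bar>pit p b d w1 w2 x lam\<bar>
      \<le> (M0 + \<beta>\<^sup>2 * \<bar>lam0 - lam\<bar> / (\<eta> * \<eta>0)) * x\<^sup>2) (at_right 0)"
    by eventually_elim
      (intro pit_bound_change_lambda, use b_bound bound0 \<open>\<eta> > 0\<close> \<open>\<eta>0 > 0\<close> in auto)
  then show thesis by (rule that)
qed

lemma wt_pit_has_deriv_at:
  assumes "C2_on {0<..1} p" "C2_on {0<..1} d" "C2_on {0<..1} b"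
    and "C2_on {0<..1} w1" "C2_on {0<..1} w2"
    and x: "x \<in> {0<..<1}" and "wt w1 w2 x \<noteq> 0" "d x \<noteq> lam"
  shows "(wt w1 w2 has_real_derivative deriv (wt w1 w2) x) (at x)"
    and "(deriv (wt w1 w2) has_real_derivative deriv (deriv (wt w1 w2)) x) (at x)"
    and "((\<lambda>y. pit p b d w1 w2 y lam) has_real_derivative deriv (\<lambda>y. pit p b d w1 w2 y lam) x) (at x)"
proof -
  have sub: "{0<..<1} \<subseteq> {0<..1::real}" by auto
  note C2_at = C2_on_has_deriv_at[OF _ open_greaterThanLessThan sub x]
  note differentiable = C2_on_differentiable_at[OF _ open_greaterThanLessThan sub x]
  show "(wt w1 w2 has_real_derivative deriv (wt w1 w2) x) (at x)"
    and "(deriv (wt w1 w2) has_real_derivative deriv (deriv (wt w1 w2)) x) (at x)"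
    using C2_at[OF C2_on_mult[OF assms(4,5)]] unfolding wt_def[abs_def] by auto
  have "w1 x \<noteq> 0" using \<open>wt w1 w2 x \<noteq> 0\<close> by (simp add: wt_def)
  then have "(\<lambda>y. pit p b d w1 w2 y lam) differentiable at x"
    using assms by (intro pit_differentiable_at differentiable) auto
  then show "((\<lambda>y. pit p b d w1 w2 y lam) has_real_derivative deriv (\<lambda>y. pit p b d w1 w2 y lam) x) (at x)"
    by (simp add: DERIV_deriv_iff_real_differentiable)
qed

theorem lemma6p3:
  fixes p d q w1 w2 :: "real \<Rightarrow> real"
    and b c :: "real \<Rightarrow> complex"
    and d0 :: ereal
    and rho0 kappa0 :: "real \<Rightarrow> complex"
  assumes reg_p: "C2_on {0<..1} p" and reg_d: "C2_on {0<..1} d"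
    and reg_b: "C2_on {0<..1} b" and reg_c: "C1_on {0<..1} c"
    and reg_q: "continuous_on {0<..1} q"
    and p_pos: "\<forall>x\<in>{0<..1}. p x > 0"
    and reg_w1: "C2_on {0<..1} w1" and reg_w2: "C2_on {0<..1} w2"
    and w_pos: "\<forall>x\<in>{0<..<1}. wt w1 w2 x > 0"
    and B1: "((\<lambda>x. ereal (d x)) \<longlongrightarrow> d0) (at_right 0)"
    and B2: "\<exists>\<beta>>0. \<exists>\<gamma>>0. \<forall>x\<in>{0<..1}.
               cmod (b x / complex_of_real x) \<le> \<beta> * (\<bar>d x\<bar> + 1)
             \<and> cmod (c x) \<le> \<gamma> * (\<bar>d x\<bar> + 1)"
    and B3a: "\<exists>lam::real. ereal lam \<noteq> d0 \<and> (\<exists>xl\<in>{0<..<1}.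
               (\<forall>x\<in>{0<..xl}. d x \<noteq> lam)
             \<and> bounded ((\<lambda>x. pit p b d w1 w2 x lam / x\<^sup>2) ` {0<..xl}))"
    and B3b: "\<forall>lam::real. ereal lam \<noteq> d0 \<and> lam \<notin> closure (Deltat p b d w1 w2 ` {0<..1}) \<longrightarrow>
             (\<exists>xl\<in>{0<..<1}.
               (\<forall>x\<in>{0<..xl}. d x \<noteq> lam \<and> pit p b d w1 w2 x lam \<noteq> 0)
             \<and> bounded ((\<lambda>x. x\<^sup>2 / pit p b d w1 w2 x lam) ` {0<..xl})
             \<and> bounded ((\<lambda>x. rhot p b c d w1 w2 x lam / complex_of_real x) ` {0<..xl})
             \<and> bounded ((\<lambda>x. kappat p b c d q w1 w2 x lam) ` {0<..xl}))"
    and C1: "\<forall>lam::real. ereal lam \<noteq> d0 \<and> lam \<notin> closure (Deltat p b d w1 w2 ` {0<..1}) \<longrightarrow>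
             ((\<lambda>x. complex_of_real x * rhot p b c d w1 w2 x lam
                    / complex_of_real (pit p b d w1 w2 x lam)) \<longlongrightarrow> rho0 lam) (at_right 0)
           \<and> ((\<lambda>x. complex_of_real (x\<^sup>2) * kappat p b c d q w1 w2 x lam
                    / complex_of_real (pit p b d w1 w2 x lam)) \<longlongrightarrow> kappa0 lam) (at_right 0)"
    and C2: "\<exists>L::real. ((\<lambda>x. x\<^sup>2 * deriv (deriv (wt w1 w2)) x / wt w1 w2 x) \<longlongrightarrow> L) (at_right 0)"
  shows "\<forall>lam::real. ereal lam \<noteq> d0 \<and> lam \<notin> closure (Deltat p b d w1 w2 ` {0<..1}) \<longrightarrow>
           ((\<lambda>x. x * deriv (\<lambda>y. pit p b d w1 w2 y lam) x / pit p b d w1 w2 x lam) \<longlongrightarrow> 2)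
              (at_right 0)
         \<and> (let W = (\<lambda>t::real. 1 + exp (- t) * deriv (wt w1 w2) (exp (- t)) / wt w1 w2 (exp (- t)))
            in \<exists>L::real. (W \<longlongrightarrow> L) at_top \<and> ((\<lambda>t. deriv W t) \<longlongrightarrow> 0) at_top
                  \<and> Im (rho0 lam) = 1 + L)"
proof (intro allI impI)
  fix lam :: real
  assume lam: "ereal lam \<noteq> d0 \<and> lam \<notin> closure (Deltat p b d w1 w2 ` {0<..1})"
  define w where "w = wt w1 w2"
  define P where "P y = pit p b d w1 w2 y lam" for y
  obtain xl where xl: "xl \<in> {0<..<1}" and P_ne: "\<forall>x\<in>{0<..xl}. d x \<noteq> lam \<and> P x \<noteq> 0"
    and "bounded ((\<lambda>x. x\<^sup>2 / P x) ` {0<..xl})"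
    using B3b lam unfolding P_def by blast
  then obtain M1 where M1: "\<forall>x\<in>{0<..xl}. \<bar>x\<^sup>2 / P x\<bar> \<le> M1"
    unfolding bounded_iff by auto
  obtain lam0 xl0 where "ereal lam0 \<noteq> d0" "xl0 \<in> {0<..<1}"
    and "bounded ((\<lambda>x. pit p b d w1 w2 x lam0 / x\<^sup>2) ` {0<..xl0})"
    using B3a by blast
  then obtain M0 where bound0: "\<forall>x\<in>{0<..xl0}. \<bar>pit p b d w1 w2 x lam0 / x\<^sup>2\<bar> \<le> M0"
    unfolding bounded_iff by auto
  obtain \<beta> where b_bound: "\<forall>x\<in>{0<..1}. cmod (b x / complex_of_real x) \<le> \<beta> * (\<bar>d x\<bar> + 1)"
    using B2 by blast
  have "xl0 > 0" using \<open>xl0 \<in> {0<..<1}\<close> by simp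
  with eventually_pit_bounded_by_square[OF B1 b_bound _ \<open>ereal lam0 \<noteq> d0\<close> _ bound0] lam
  obtain M2 where upper: "eventually (\<lambda>x. \<bar>P x\<bar> \<le> M2 * x\<^sup>2) (at_right 0)"
    unfolding P_def by blast
  have near0: "eventually (\<lambda>x. 0 < x \<and> x < xl) (at_right 0)"
    unfolding eventually_at_right_field using xl by auto
  then have comparable: "eventually (\<lambda>x. x\<^sup>2 \<le> M1 * \<bar>P x\<bar> \<and> \<bar>P x\<bar> \<le> M2 * x\<^sup>2) (at_right 0)"
    using upper by eventually_elim (use M1 P_ne in \<open>auto simp: abs_divide divide_le_eq\<close>)
  from near0 have regular: "eventually (\<lambda>x. w x \<noteq> 0 \<and> (w has_real_derivative deriv w x) (at x)
        \<and> (deriv w has_real_derivative deriv (deriv w) x) (at x)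
        \<and> P x \<noteq> 0 \<and> (P has_real_derivative deriv P x) (at x)) (at_right 0)"
  proof eventually_elim
    case (elim x)
    then have x: "x \<in> {0<..<1}" using xl by simp
    with w_pos[rule_format, OF x] P_ne elim have "wt w1 w2 x \<noteq> 0" "d x \<noteq> lam" "P x \<noteq> 0" by auto
    with wt_pit_has_deriv_at[OF reg_p reg_d reg_b reg_w1 reg_w2 x] show ?case
      unfolding w_def P_def by simp
  qed
  have "((\<lambda>x. complex_of_real x * rhot p b c d w1 w2 x lam / complex_of_real (P x)) \<longlongrightarrow> rho0 lam)
      (at_right 0)"
    using C1 lam unfolding P_def by blast
  from tendsto_Im[OF this]
  have sum_lim: "((\<lambda>x. x * deriv w x / w x + x * deriv P x / P x) \<longlongrightarrow> Im (rho0 lam)) (at_right 0)"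
  proof (rule Lim_transform_eventually)
    from regular show "eventually (\<lambda>x. Im (complex_of_real x * rhot p b c d w1 w2 x lam
        / complex_of_real (P x)) = x * deriv w x / w x + x * deriv P x / P x) (at_right 0)"
      unfolding w_def P_def by eventually_elim (rule Im_scaled_rhot_div_pit; auto)
  qed
  obtain K where "((\<lambda>x. x\<^sup>2 * deriv (deriv w) x / w x) \<longlongrightarrow> K) (at_right 0)"
    using C2 unfolding w_def by blast
  from scaled_log_derivative_limits[OF regular comparable this sum_lim]
  show "((\<lambda>x. x * deriv (\<lambda>y. pit p b d w1 w2 y lam) x / pit p b d w1 w2 x lam) \<longlongrightarrow> 2) (at_right 0)
    \<and> (let W = \<lambda>t::real. 1 + exp (- t) * deriv (wt w1 w2) (exp (- t)) / wt w1 w2 (exp (- t))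
       in \<exists>L::real. (W \<longlongrightarrow> L) at_top \<and> ((\<lambda>t. deriv W t) \<longlongrightarrow> 0) at_top \<and> Im (rho0 lam) = 1 + L)"
    unfolding Let_def w_def P_def by (intro conjI exI[of _ "Im (rho0 lam) - 1"]) auto
qed

end
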